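(* Let $n\ge2$ and let $\psi:\mathbb D\to\widetilde\Gamma_n$ be an analytic map such that $\psi(\lambda_0)\in\widetilde{\mathbb G}_n$ for some $\lambda_0\in\mathbb D$. Then $\psi(\mathbb D)\subset\widetilde{\mathbb G}_n$.
   Context: $\mathbb D$ is the open unit disc. $\widetilde{\mathbb G}_n=\{(y_1,\dots,y_{n-1},q)\in\mathbb C^n: q\in\mathbb D,\ y_j=\beta_j+\bar\beta_{n-j}q$ for some $\beta_j\in\mathbb C$ with $|\beta_j|+|\beta_{n-j}|<\binom{n}{j}$, $j=1,\dots,n-1\}$; $\widetilde\Gamma_n$ is its closure. *)

theory Defs
  imports "HOL-Analysis.Analysis"
begin

text \<open>A point of C^n is represented as a function x :: nat \<Rightarrow> complex, where
  x 1, ..., x (n-1) are the coordinates y_1, ..., y_(n-1) and x n is the coordinate q.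
  Coordinates outside {1..n} are irrelevant (membership ignores them).\<close>

definition tetra_G :: "nat \<Rightarrow> (nat \<Rightarrow> complex) set" where
  "tetra_G n = {x. x n \<in> ball 0 1 \<and>
     (\<exists>\<beta> :: nat \<Rightarrow> complex. \<forall>j\<in>{1..n-1}.
        x j = \<beta> j + cnj (\<beta> (n - j)) * x n \<and>
        norm (\<beta> j) + norm (\<beta> (n - j)) < real (n choose j))}"

text \<open>Closure in the product topology of nat \<Rightarrow> complex; since membership in tetra_G
  does not depend on coordinates outside {1..n}, this is the closure in C^n
  (with arbitrary extra coordinates).\<close>
definition tetra_Gamma :: "nat \<Rightarrow> (nat \<Rightarrow> complex) set" where
  "tetra_Gamma n = closure (tetra_G n)"

end

theory Submission
  imports Defs "HOL-Complex_Analysis.Conformal_Mappings"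
begin

text \<open>G_n is cut out by |q| < 1 together with the defect inequalities
  |y_j - q conj y_(n-j)| + |y_(n-j) - q conj y_j| < C_j (1 - |q|^2), where C_j = n choose j,
  and Gamma_n satisfies their non-strict versions.  For |q| < 1 a defect inequality is
  equivalent to the family |C_j q z - y_j| < |y_(n-j) z - C_j|, |C_j q z - y_(n-j)| < |y_j z - C_j|
  over all unimodular z, and the non-strict defect bound gives the non-strict family.  Along
  the map each member of the family compares two holomorphic functions of lambda whose
  right-hand side never vanishes, so the maximum modulus principle applied to their quotient
  carries strictness from lambda_0 to the whole disc.  The same argument with the constant
  comparison functions 1 and C_j first gives |q| < 1 and |y_j| < C_j everywhere, which keeps
  the denominators away from zero.\<close>

definition conj_gap :: "complex \<Rightarrow> complex \<Rightarrow> complex \<Rightarrow> real" where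
  "conj_gap q a b = norm (a - q * cnj b) + norm (b - q * cnj a)"

lemma conj_pair_defect:
  assumes "a = \<alpha> + cnj \<beta> * q" and "b = \<beta> + cnj \<alpha> * q"
  shows "a - q * cnj b = of_real (1 - (norm q)^2) * \<alpha>"
  unfolding assms cmod_power2 by (simp add: complex_eq_iff power2_eq_square algebra_simps)

lemma conj_pair_recover:
  "of_real (1 - (norm q)^2) * a = (a - q * cnj b) + cnj (b - q * cnj a) * q"
  unfolding cmod_power2 by (simp add: complex_eq_iff power2_eq_square algebra_simps)

lemma circle_gap_identity:
  fixes a b q z :: complex and C :: real
  assumes "norm z = 1"
  defines "K \<equiv> 1 - (norm q)^2"
  shows "K * ((norm (b * z - of_real C))^2 - (norm (of_real C * q * z - a))^2)
    = (C * K)^2 + (norm (b - q * cnj a))^2 - (norm (a - q * cnj b))^2 - 2 * C * K * Re (z * (b - q * cnj a))"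
proof -
  have z: "(Re z)^2 + (Im z)^2 = 1" using assms by (simp add: cmod_def)
  show ?thesis
    unfolding K_def cmod_power2
    apply (simp add: power2_eq_square algebra_simps)
    using z unfolding power2_eq_square by algebra
qed

lemma exists_unit_rotation: "\<exists>z. norm z = 1 \<and> z * v = of_real (norm (v::complex))"
proof (cases "v = 0")
  case False
  then show ?thesis
    by (intro exI[of _ "cnj (sgn v)"])
      (simp add: sgn_eq norm_divide field_simps mult.commute[of "cnj v"]
        complex_norm_square[symmetric] power2_eq_square)
qed (auto intro: exI[of _ 1])

lemma circle_gap_lower_bound:
  fixes a b q z :: complex and C :: real
  assumes "norm z = 1" and "C \<ge> 0" and "norm q \<le> 1"
  defines "K \<equiv> 1 - (norm q)^2"
  shows "(C * K - norm (b - q * cnj a))^2 - (norm (a - q * cnj b))^2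
    \<le> K * ((norm (b * z - of_real C))^2 - (norm (of_real C * q * z - a))^2)"
proof -
  have "K \<ge> 0" using assms(3) unfolding K_def by (simp add: abs_square_le_1)
  moreover have "Re (z * (b - q * cnj a)) \<le> norm (b - q * cnj a)"
    using complex_Re_le_cmod[of "z * (b - q * cnj a)"] assms(1) by (simp add: norm_mult)
  ultimately have "C * K * Re (z * (b - q * cnj a)) \<le> C * K * norm (b - q * cnj a)"
    using assms(2) by (simp add: mult_left_mono)
  then show ?thesis
    using circle_gap_identity[OF assms(1), of q b C a] unfolding K_def
    by (simp add: power2_eq_square algebra_simps)
qed

lemma circle_le_of_conj_gap_le:
  assumes "norm q < 1" and "C \<ge> 0" and "norm z = 1"
    and "conj_gap q a b \<le> C * (1 - (norm q)^2)"
  shows "norm (of_real C * q * z - a) \<le> norm (b * z - of_real C)"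
proof -
  define K where "K = 1 - (norm q)^2"
  define D where "D = (norm (b * z - of_real C))^2 - (norm (of_real C * q * z - a))^2"
  have K: "K > 0" using assms(1) unfolding K_def by (simp add: abs_square_less_1)
  have "(norm (a - q * cnj b))^2 \<le> (C * K - norm (b - q * cnj a))^2"
    using assms(4) unfolding conj_gap_def K_def by (intro power_mono norm_ge_zero) linarith
  moreover have "(C * K - norm (b - q * cnj a))^2 - (norm (a - q * cnj b))^2 \<le> K * D"
    unfolding K_def D_def by (rule circle_gap_lower_bound[OF assms(3,2)]) (use assms(1) in simp)
  ultimately have "0 \<le> D"
    using mult_le_cancel_left_pos[OF K, of 0 D] by linarith
  then have "(norm (of_real C * q * z - a))^2 \<le> (norm (b * z - of_real C))^2"
    unfolding D_def by linarith
  then show ?thesis by (rule power2_le_imp_le) simp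
qed

lemma circle_less_of_conj_gap_less:
  assumes "norm q < 1" and "C \<ge> 0" and "norm z = 1"
    and "conj_gap q a b < C * (1 - (norm q)^2)"
  shows "norm (of_real C * q * z - a) < norm (b * z - of_real C)"
proof -
  define K where "K = 1 - (norm q)^2"
  define D where "D = (norm (b * z - of_real C))^2 - (norm (of_real C * q * z - a))^2"
  have K: "K > 0" using assms(1) unfolding K_def by (simp add: abs_square_less_1)
  have "(norm (a - q * cnj b))^2 < (C * K - norm (b - q * cnj a))^2"
    using assms(4) unfolding conj_gap_def K_def by (intro power_strict_mono norm_ge_zero) linarith+
  moreover have "(C * K - norm (b - q * cnj a))^2 - (norm (a - q * cnj b))^2 \<le> K * D"
    unfolding K_def D_def by (rule circle_gap_lower_bound[OF assms(3,2)]) (use assms(1) in simp)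
  ultimately have "0 < D"
    using mult_less_cancel_left_pos[OF K, of 0 D] by linarith
  then have "(norm (of_real C * q * z - a))^2 < (norm (b * z - of_real C))^2"
    unfolding D_def by linarith
  then show ?thesis by (rule power_less_imp_less_base) simp
qed

lemma conj_gap_less_of_circle_less:
  assumes "norm q < 1" and "C > 0"
    and "\<And>z. norm z = 1 \<Longrightarrow> norm (of_real C * q * z - a) < norm (b * z - of_real C)"
    and "\<And>z. norm z = 1 \<Longrightarrow> norm (of_real C * q * z - b) < norm (a * z - of_real C)"
  shows "conj_gap q a b < C * (1 - (norm q)^2)"
proof -
  define K where "K = 1 - (norm q)^2"
  define u where "u = a - q * cnj b"
  define v where "v = b - q * cnj a"
  have K: "K > 0" using assms(1) unfolding K_def by (simp add: abs_square_less_1)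
  txt \<open>A rotation z with z t = |t| attains the bound of circle_gap_lower_bound; adding the
    inequalities obtained for (a, b) and (b, a) cancels the squared defects.\<close>
  have positive_at_rotation: "0 < (C * K)^2 + (norm t)^2 - (norm s)^2 - 2 * C * K * norm t"
    if circle: "\<And>z. norm z = 1 \<Longrightarrow> norm (of_real C * q * z - c) < norm (d * z - of_real C)"
      and t: "t = d - q * cnj c" and s: "s = c - q * cnj d" for c d s t
  proof -
    obtain z where z: "norm z = 1" "z * t = of_real (norm t)" using exists_unit_rotation by blast
    have "(norm (of_real C * q * z - c))^2 < (norm (d * z - of_real C))^2"
      using circle[OF z(1)] by (intro power_strict_mono) auto
    then have "0 < K * ((norm (d * z - of_real C))^2 - (norm (of_real C * q * z - c))^2)"
      using K by simp
    then show ?thesis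
      using circle_gap_identity[OF z(1), of q d C c] z(2) unfolding K_def t s by simp
  qed
  have "0 < (C * K)^2 + (norm v)^2 - (norm u)^2 - 2 * C * K * norm v"
    using positive_at_rotation[OF assms(3)] unfolding u_def v_def by blast
  moreover have "0 < (C * K)^2 + (norm u)^2 - (norm v)^2 - 2 * C * K * norm u"
    using positive_at_rotation[OF assms(4)] unfolding u_def v_def by blast
  ultimately have "C * K * (norm u + norm v) < C * K * (C * K)"
    by (simp add: power2_eq_square algebra_simps)
  then show ?thesis
    using K assms(2) unfolding conj_gap_def K_def u_def v_def by simp
qed

lemma norm_le_conj_gap:
  assumes "norm q \<le> 1"
  shows "(1 - (norm q)^2) * norm a \<le> conj_gap q a b"
proof -
  have K: "1 - (norm q)^2 \<ge> 0" using assms by (simp add: abs_square_le_1)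
  have "(1 - (norm q)^2) * norm a = norm (of_real (1 - (norm q)^2) * a)"
    by (simp only: norm_mult norm_of_real abs_of_nonneg[OF K])
  also have "\<dots> \<le> norm (a - q * cnj b) + norm (cnj (b - q * cnj a) * q)"
    by (subst conj_pair_recover[of q a b]) (rule norm_triangle_ineq)
  also have "\<dots> = norm (a - q * cnj b) + norm (b - q * cnj a) * norm q"
    by (simp only: norm_mult complex_mod_cnj)
  also have "\<dots> \<le> conj_gap q a b"
    using mult_left_le[OF assms norm_ge_zero, of "b - q * cnj a"] unfolding conj_gap_def by linarith
  finally show ?thesis .
qed

lemma holomorphic_norm_less_of_le:
  fixes f g :: "complex \<Rightarrow> complex"
  assumes "f holomorphic_on S" and "g holomorphic_on S" and "open S" and "connected S"
    and "\<And>z. z \<in> S \<Longrightarrow> g z \<noteq> 0" and "\<And>z. z \<in> S \<Longrightarrow> norm (f z) \<le> norm (g z)"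
    and "\<xi> \<in> S" and "norm (f \<xi>) < norm (g \<xi>)" and "w \<in> S"
  shows "norm (f w) < norm (g w)"
proof (rule ccontr)
  define h where "h z = f z / g z" for z
  have h_le: "norm (h z) \<le> 1" if "z \<in> S" for z
    using assms(5,6)[OF that] unfolding h_def by (simp add: norm_divide divide_le_eq_1)
  assume "\<not> norm (f w) < norm (g w)"
  then have "norm (h w) = 1"
    using h_le[OF assms(9)] assms(5)[OF assms(9)] unfolding h_def by (simp add: norm_divide)
  then have "h constant_on S"
    using h_le assms(1-5,9) unfolding h_def
    by (intro maximum_modulus_principle[where U = S and \<xi> = w]) (auto intro!: holomorphic_intros)
  then have "norm (h \<xi>) = 1"
    using \<open>norm (h w) = 1\<close> assms(7,9) unfolding constant_on_def by auto
  then show False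
    using assms(5,7,8) unfolding h_def by (simp add: norm_divide)
qed

lemma tetra_G_iff:
  "x \<in> tetra_G n \<longleftrightarrow> norm (x n) < 1 \<and>
    (\<forall>j\<in>{1..n-1}. conj_gap (x n) (x j) (x (n - j)) < real (n choose j) * (1 - (norm (x n))^2))" (is "_ \<longleftrightarrow> ?R")
proof
  assume "x \<in> tetra_G n"
  then obtain \<beta> where q: "norm (x n) < 1" and \<beta>: "\<forall>j\<in>{1..n-1}.
      x j = \<beta> j + cnj (\<beta> (n - j)) * x n \<and> norm (\<beta> j) + norm (\<beta> (n - j)) < real (n choose j)"
    unfolding tetra_G_def by auto
  have K: "1 - (norm (x n))^2 > 0" using q by (simp add: abs_square_less_1)
  have "conj_gap (x n) (x j) (x (n - j)) < real (n choose j) * (1 - (norm (x n))^2)"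
    if j: "j \<in> {1..n-1}" for j
  proof -
    have "n - j \<in> {1..n-1}" and "n - (n - j) = j" using j by auto
    then have e: "x j = \<beta> j + cnj (\<beta> (n - j)) * x n" "x (n - j) = \<beta> (n - j) + cnj (\<beta> j) * x n"
      using \<beta> j by (metis (no_types, lifting))+
    have "conj_gap (x n) (x j) (x (n - j)) = (1 - (norm (x n))^2) * (norm (\<beta> j) + norm (\<beta> (n - j)))"
      unfolding conj_gap_def conj_pair_defect[OF e] conj_pair_defect[OF e(2,1)]
      by (simp only: norm_mult norm_of_real abs_of_pos[OF K] distrib_left)
    also have "\<dots> < (1 - (norm (x n))^2) * real (n choose j)"
      using \<beta> j K by (intro mult_strict_left_mono) auto
    finally show ?thesis by (simp add: mult.commute)
  qed
  with q show ?R by blast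
next
  assume q_gap: ?R
  define K where "K = 1 - (norm (x n))^2"
  have K: "K > 0" using q_gap unfolding K_def by (simp add: abs_square_less_1)
  define \<beta> where "\<beta> j = (x j - x n * cnj (x (n - j))) / of_real K" for j
  have "x j = \<beta> j + cnj (\<beta> (n - j)) * x n \<and> norm (\<beta> j) + norm (\<beta> (n - j)) < real (n choose j)"
    if j: "j \<in> {1..n-1}" for j
  proof
    have nj: "n - (n - j) = j" using j by auto
    have "\<beta> j + cnj (\<beta> (n - j)) * x n
        = ((x j - x n * cnj (x (n - j))) + cnj (x (n - j) - x n * cnj (x j)) * x n) / of_real K"
      unfolding \<beta>_def nj by (simp add: add_divide_distrib)
    also have "\<dots> = of_real K * x j / of_real K"
      unfolding K_def by (subst conj_pair_recover) (rule refl)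
    finally show "x j = \<beta> j + cnj (\<beta> (n - j)) * x n" using K by simp
    have "norm (\<beta> j) + norm (\<beta> (n - j)) = conj_gap (x n) (x j) (x (n - j)) / K"
      unfolding \<beta>_def conj_gap_def nj using K by (simp add: norm_divide add_divide_distrib)
    also have "\<dots> < real (n choose j)"
      using q_gap j K unfolding K_def by (simp add: divide_less_eq)
    finally show "norm (\<beta> j) + norm (\<beta> (n - j)) < real (n choose j)" .
  qed
  then show "x \<in> tetra_G n"
    unfolding tetra_G_def using q_gap by auto
qed

lemma tetra_Gamma_bounds:
  assumes "x \<in> tetra_Gamma n"
  shows "norm (x n) \<le> 1"
    and "j \<in> {1..n-1} \<Longrightarrow> conj_gap (x n) (x j) (x (n - j)) \<le> real (n choose j) * (1 - (norm (x n))^2)"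
proof -
  define S where "S = {x :: nat \<Rightarrow> complex. norm (x n) \<le> 1} \<inter>
    (\<Inter>j\<in>{1..n-1}. {x. conj_gap (x n) (x j) (x (n - j)) \<le> real (n choose j) * (1 - (norm (x n))^2)})"
  have [continuous_intros]: "continuous_on UNIV (\<lambda>x :: nat \<Rightarrow> complex. x i)" for i
    by simp
  have "closed S"
    unfolding S_def conj_gap_def
    by (intro closed_Int closed_INT ballI closed_Collect_le continuous_intros)
  moreover have "tetra_G n \<subseteq> S"
  proof
    fix y assume "y \<in> tetra_G n"
    then show "y \<in> S" unfolding tetra_G_iff S_def by (auto intro: less_imp_le)
  qed
  ultimately have "x \<in> S"
    using assms closure_minimal unfolding tetra_Gamma_def by blast
  then show "norm (x n) \<le> 1"
    and "j \<in> {1..n-1} \<Longrightarrow> conj_gap (x n) (x j) (x (n - j)) \<le> real (n choose j) * (1 - (norm (x n))^2)"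
    unfolding S_def by auto
qed

locale tetra_Gamma_map =
  fixes n :: nat and \<psi> :: "complex \<Rightarrow> nat \<Rightarrow> complex" and S :: "complex set" and \<xi> :: complex
  assumes n_pos: "1 \<le> n"
    and holomorphic_coord: "\<And>j. j \<in> {1..n} \<Longrightarrow> (\<lambda>z. \<psi> z j) holomorphic_on S"
    and open_domain: "open S" and connected_domain: "connected S"
    and maps_to_Gamma: "\<And>z. z \<in> S \<Longrightarrow> \<psi> z \<in> tetra_Gamma n"
    and base_point: "\<xi> \<in> S" and base_point_in_G: "\<psi> \<xi> \<in> tetra_G n"
begin

lemma norm_last_coord_less:
  assumes "w \<in> S"
  shows "norm (\<psi> w n) < 1"
proof -
  have "norm (\<psi> w n) < norm ((\<lambda>_. 1 :: complex) w)"
  proof (rule holomorphic_norm_less_of_le[OF _ _ open_domain connected_domain _ _ base_point _ assms])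
    show "(\<lambda>z. \<psi> z n) holomorphic_on S" using holomorphic_coord n_pos by simp
    show "norm (\<psi> z n) \<le> norm ((\<lambda>_. 1 :: complex) z)" if "z \<in> S" for z
      using tetra_Gamma_bounds(1)[OF maps_to_Gamma[OF that]] by simp
    show "norm (\<psi> \<xi> n) < norm ((\<lambda>_. 1 :: complex) \<xi>)"
      using base_point_in_G unfolding tetra_G_iff by simp
  qed auto
  then show ?thesis by simp
qed

lemma norm_coord_less:
  assumes "w \<in> S" and j: "j \<in> {1..n-1}"
  shows "norm (\<psi> w j) < real (n choose j)"
proof -
  let ?C = "\<lambda>_. complex_of_real (real (n choose j))"
  have C: "real (n choose j) > 0" using j by auto
  have K: "1 - (norm (\<psi> z n))^2 > 0" if "z \<in> S" for z
    using norm_last_coord_less[OF that] by (simp add: abs_square_less_1)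
  have gap: "(1 - (norm (\<psi> z n))^2) * norm (\<psi> z j) \<le> conj_gap (\<psi> z n) (\<psi> z j) (\<psi> z (n - j))"
    if "z \<in> S" for z
    using norm_le_conj_gap norm_last_coord_less[OF that] by simp
  have "norm (\<psi> w j) < norm (?C w)"
  proof (rule holomorphic_norm_less_of_le[OF _ _ open_domain connected_domain _ _ base_point _ assms(1)])
    show "(\<lambda>z. \<psi> z j) holomorphic_on S" by (rule holomorphic_coord) (use j in auto)
    show "norm (\<psi> z j) \<le> norm (?C z)" if z: "z \<in> S" for z
      using gap[OF z] tetra_Gamma_bounds(2)[OF maps_to_Gamma[OF z] j]
        mult_le_cancel_left_pos[OF K[OF z], of "norm (\<psi> z j)" "real (n choose j)"]
      by (simp add: mult.commute)
    have "conj_gap (\<psi> \<xi> n) (\<psi> \<xi> j) (\<psi> \<xi> (n - j)) < real (n choose j) * (1 - (norm (\<psi> \<xi> n))^2)"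
      using base_point_in_G j unfolding tetra_G_iff by blast
    then show "norm (\<psi> \<xi> j) < norm (?C \<xi>)"
      using gap[OF base_point]
        mult_less_cancel_left_pos[OF K[OF base_point], of "norm (\<psi> \<xi> j)" "real (n choose j)"]
      by (simp add: mult.commute)
  qed (use C in auto)
  then show ?thesis by simp
qed

lemma circle_coord_less:
  assumes w: "w \<in> S" and j: "j \<in> {1..n-1}" and z: "norm z = 1"
  shows "norm (of_real (real (n choose j)) * \<psi> w n * z - \<psi> w j)
    < norm (\<psi> w (n - j) * z - of_real (real (n choose j)))"
proof (rule holomorphic_norm_less_of_le[OF _ _ open_domain connected_domain _ _ base_point _ w])
  have nj: "n - j \<in> {1..n-1}" and choose_nj: "n choose (n - j) = n choose j"
    using j by (auto intro: binomial_symmetric[symmetric])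
  show "\<psi> u (n - j) * z - of_real (real (n choose j)) \<noteq> 0" if u: "u \<in> S" for u
  proof
    assume "\<psi> u (n - j) * z - of_real (real (n choose j)) = 0"
    then have "norm (\<psi> u (n - j) * z) = real (n choose j)"
      by simp
    then have "norm (\<psi> u (n - j)) = real (n choose j)"
      using z by (simp add: norm_mult)
    then show False
      using norm_coord_less[OF u nj] unfolding choose_nj by simp
  qed
  have "j \<in> {1..n}" "n - j \<in> {1..n}" "n \<in> {1..n}" using j n_pos by auto
  then show "(\<lambda>u. of_real (real (n choose j)) * \<psi> u n * z - \<psi> u j) holomorphic_on S"
    and "(\<lambda>u. \<psi> u (n - j) * z - of_real (real (n choose j))) holomorphic_on S"
    by (auto intro!: holomorphic_intros holomorphic_coord)
  show "norm (of_real (real (n choose j)) * \<psi> u n * z - \<psi> u j)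
      \<le> norm (\<psi> u (n - j) * z - of_real (real (n choose j)))"
    if u: "u \<in> S" for u
    using circle_le_of_conj_gap_le[OF norm_last_coord_less[OF u] _ z
        tetra_Gamma_bounds(2)[OF maps_to_Gamma[OF u] j]] by simp
  show "norm (of_real (real (n choose j)) * \<psi> \<xi> n * z - \<psi> \<xi> j)
      < norm (\<psi> \<xi> (n - j) * z - of_real (real (n choose j)))"
  proof (rule circle_less_of_conj_gap_less[OF norm_last_coord_less[OF base_point] _ z])
    show "conj_gap (\<psi> \<xi> n) (\<psi> \<xi> j) (\<psi> \<xi> (n - j)) < real (n choose j) * (1 - (norm (\<psi> \<xi> n))^2)"
      using base_point_in_G j unfolding tetra_G_iff by blast
  qed simp
qed

lemma image_subset_tetra_G: "\<psi> ` S \<subseteq> tetra_G n"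
proof
  fix x assume "x \<in> \<psi> ` S"
  then obtain w where w: "w \<in> S" and x: "x = \<psi> w" by blast
  show "x \<in> tetra_G n"
    unfolding x tetra_G_iff
  proof (intro conjI ballI norm_last_coord_less[OF w])
    fix j assume j: "j \<in> {1..n-1}"
    have nj: "n - j \<in> {1..n-1}" and nnj: "n - (n - j) = j" and choose_nj: "n choose (n - j) = n choose j"
      using j by (auto intro: binomial_symmetric[symmetric])
    show "conj_gap (\<psi> w n) (\<psi> w j) (\<psi> w (n - j)) < real (n choose j) * (1 - (norm (\<psi> w n))^2)"
      using circle_coord_less[OF w j] circle_coord_less[OF w nj] j unfolding nnj choose_nj
      by (intro conj_gap_less_of_circle_less norm_last_coord_less[OF w]) auto
  qed
qed

end

theorem mainTheorem11:
  fixes n :: nat and \<psi> :: "complex \<Rightarrow> nat \<Rightarrow> complex" and z\<^sub>0 :: complex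
  assumes "n \<ge> 2"
    and "\<And>j. j \<in> {1..n} \<Longrightarrow> (\<lambda>z. \<psi> z j) analytic_on ball 0 1"
    and "\<And>z. z \<in> ball 0 1 \<Longrightarrow> \<psi> z \<in> tetra_Gamma n"
    and "z\<^sub>0 \<in> ball 0 1" and "\<psi> z\<^sub>0 \<in> tetra_G n"
  shows "\<psi> ` ball 0 1 \<subseteq> tetra_G n"
proof -
  interpret tetra_Gamma_map n \<psi> "ball 0 1" z\<^sub>0
    by unfold_locales (use assms in \<open>auto intro: analytic_imp_holomorphic\<close>)
  show ?thesis by (rule image_subset_tetra_G)
qed

end
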